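(* Let $(\mathcal{L},[\cdot,\cdot],\alpha)$ be a Hom-Lie algebra. For all $a(w),b(w),c(w)\in\mathcal{L}[[w,w^{-1}]]$ and $m,n\in\mathbb{Z}_{\ge0}$, the $j$-products satisfy: (1) $(\partial a)_{(n)}b=-n\,a_{(n-1)}b$ and $a_{(n)}(\partial b)=\partial(a_{(n)}b)+n\,a_{(n-1)}b$; (2) if $(a,b)$ is a local pair, then $a_{(n)}b=-\sum_{i\ge0}(-1)^{n+i}\frac{1}{i!}\partial^i(b_{(n+i)}a)$; (3) $\alpha(a)_{(m)}(b_{(n)}c)=\alpha(b)_{(n)}(a_{(m)}c)+\sum_{i=0}^m\binom{m}{i}(a_{(i)}b)_{(m+n-i)}\alpha(c)$.
   Context: A Hom-Lie algebra is a complex vector space $\mathcal{L}$ with a bilinear map $[\cdot,\cdot]$ and linear map $\alpha$ with $[x,y]=-[y,x]$ and $[[x,y],\alpha(z)]+[[y,z],\alpha(x)]+[[z,x],\alpha(y)]=0$. For $a(z)=\sum_{m\in\mathbb{Z}}a_{(m)}z^{-m-1}$ and $b(w)=\sum_n b_{(n)}w^{-n-1}$, set $[a(z),b(w)]=\sum_{m,n}[a_{(m)},b_{(n)}]z^{-m-1}w^{-n-1}$. This is local if $(z-w)^N[a(z),b(w)]=0$ for some positive integer $N$, and then $(a,b)$ is called a local pair. For $j\in\mathbb{Z}_{\ge0}$ the $j$-product is $a_{(j)}b=\mathrm{Res}_z\,(z-w)^j[a(z),b(w)]\in\mathcal{L}[[w,w^{-1}]]$, where $\mathrm{Res}_z$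 takes the coefficient of $z^{-1}$. The operator $\partial$ acts by $(\partial a)(w)=\partial_w a(w)$, and $\alpha$ acts by $\alpha(a)(w)=\sum_m\alpha(a_{(m)})w^{-m-1}$. Terms with factor $n$ and index $n-1$ are zero when $n=0$. *)

theory Defs
  imports Main "HOL.Complex" "HOL-Library.Groups_Big_Fun"
begin

text \<open>A formal distribution a(w) = sum_m a_(m) w^(-m-1) is represented by its
  coefficient function m |-> a_(m) :: int => 'a.
  A two-variable distribution F(z,w) = sum_{m,n} F m n z^(-m-1) w^(-n-1)
  is represented by F :: int => int => 'a.\<close>

definition hom_lie :: "(complex \<Rightarrow> 'a::ab_group_add \<Rightarrow> 'a) \<Rightarrow> ('a \<Rightarrow> 'a \<Rightarrow> 'a) \<Rightarrow> ('a \<Rightarrow> 'a) \<Rightarrow> bool" where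
  "hom_lie s br al \<longleftrightarrow>
     vector_space s \<and>
     (\<forall>x. Vector_Spaces.linear s s (br x)) \<and>
     (\<forall>y. Vector_Spaces.linear s s (\<lambda>x. br x y)) \<and>
     Vector_Spaces.linear s s al \<and>
     (\<forall>x y. br x y = - br y x) \<and>
     (\<forall>x y z. br (br x y) (al z) + br (br y z) (al x) + br (br z x) (al y) = 0)"

definition bracket2 :: "('a \<Rightarrow> 'a \<Rightarrow> 'a) \<Rightarrow> (int \<Rightarrow> 'a) \<Rightarrow> (int \<Rightarrow> 'a) \<Rightarrow> int \<Rightarrow> int \<Rightarrow> 'a" where
  "bracket2 br a b = (\<lambda>m n. br (a m) (b n))"

text \<open>Multiplication of a two-variable distribution by (z-w)^N:
  (z-w)^N = sum_{k=0}^N binom(N,k) (-1)^k z^(N-k) w^k.\<close>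
definition zw_mult :: "(complex \<Rightarrow> 'a::ab_group_add \<Rightarrow> 'a) \<Rightarrow> nat \<Rightarrow> (int \<Rightarrow> int \<Rightarrow> 'a) \<Rightarrow> int \<Rightarrow> int \<Rightarrow> 'a" where
  "zw_mult s N F = (\<lambda>m n. \<Sum>k\<le>N. s (of_int ((-1) ^ k * int (N choose k))) (F (m + int N - int k) (n + int k)))"

definition local_pair :: "(complex \<Rightarrow> 'a::ab_group_add \<Rightarrow> 'a) \<Rightarrow> ('a \<Rightarrow> 'a \<Rightarrow> 'a) \<Rightarrow> (int \<Rightarrow> 'a) \<Rightarrow> (int \<Rightarrow> 'a) \<Rightarrow> bool" where
  "local_pair s br a b \<longleftrightarrow> (\<exists>N>0. zw_mult s N (bracket2 br a b) = (\<lambda>m n. 0))"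

text \<open>j-product: a_(j) b = Res_z (z-w)^j [a(z),b(w)], i.e. the coefficient of z^(-1) (index m = 0).\<close>
definition jprod :: "(complex \<Rightarrow> 'a::ab_group_add \<Rightarrow> 'a) \<Rightarrow> ('a \<Rightarrow> 'a \<Rightarrow> 'a) \<Rightarrow> nat \<Rightarrow> (int \<Rightarrow> 'a) \<Rightarrow> (int \<Rightarrow> 'a) \<Rightarrow> int \<Rightarrow> 'a" where
  "jprod s br j a b = (\<lambda>n. zw_mult s j (bracket2 br a b) 0 n)"

text \<open>Derivative: d/dw sum_m a_(m) w^(-m-1) = sum_k (-k) a_(k-1) w^(-k-1).\<close>
definition dderiv :: "(complex \<Rightarrow> 'a \<Rightarrow> 'a) \<Rightarrow> (int \<Rightarrow> 'a) \<Rightarrow> int \<Rightarrow> 'a" where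
  "dderiv s a = (\<lambda>k. s (of_int (- k)) (a (k - 1)))"

definition amap :: "('a \<Rightarrow> 'a) \<Rightarrow> (int \<Rightarrow> 'a) \<Rightarrow> int \<Rightarrow> 'a" where
  "amap al a = (\<lambda>k. al (a k))"

end

theory Submission
  imports Defs "HOL-Library.Poly_Mapping" "HOL-Library.Product_Plus"
begin

text \<open>
  A two-variable distribution \<open>F(z,w)\<close> is determined by its pairing \<open>Res\<^sub>z Res\<^sub>w P F\<close>
  with Laurent polynomials \<open>P(z,w)\<close>, and the \<open>j\<close>-product \<open>(a\<^sub>(\<^sub>j\<^sub>) b)\<^sub>(\<^sub>k\<^sub>)\<close> is the pairing
  of \<open>[a(z),b(w)]\<close> with \<open>(z - w)\<^sup>j w\<^sup>k\<close>. Identities between \<open>j\<close>-products thus become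
  identities between Laurent polynomials. Part (3) is the Hom-Jacobi identity paired with
  \<open>(x - z)\<^sup>m (y - z)\<^sup>n = \<Sum>\<^sub>i (m choose i) (x - y)\<^sup>i (y - z)\<^sup>m\<^sup>+\<^sup>n\<^sup>-\<^sup>i\<close>.
  For part (2), locality says that every multiple of \<open>(z - w)\<^sup>N\<close> pairs to zero with
  \<open>[a(z),b(w)]\<close>, and modulo \<open>(w - z)\<^sup>N\<close> the monomial \<open>w\<^sup>k\<close> agrees with its Taylor polynomial
  \<open>\<Sum>\<^sub>i\<^sub><\<^sub>N (k choose i) (w - z)\<^sup>i z\<^sup>k\<^sup>-\<^sup>i\<close>, whose \<open>i\<close>-th term pairs to the \<open>i\<close>-th term of the
  claimed sum.
\<close>

definition signed_choose :: "nat \<Rightarrow> nat \<Rightarrow> int" where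
  "signed_choose N k = (-1) ^ k * int (N choose k)"

lemma power_diff_expand:
  "((X::'r::comm_ring_1) - Y) ^ N = (\<Sum>k\<le>N. of_int (signed_choose N k) * (X ^ (N - k) * Y ^ k))"
proof -
  have "(X - Y) ^ N = (\<Sum>k\<le>N. of_nat (N choose k) * (- Y) ^ k * X ^ (N - k))"
    using binomial_ring[of "- Y" X N] by simp
  also have "\<dots> = (\<Sum>k\<le>N. of_int (signed_choose N k) * (X ^ (N - k) * Y ^ k))"
    by (intro sum.cong refl) (simp add: signed_choose_def power_minus[of Y] mult_ac)
  finally show ?thesis .
qed

lemma signed_choose_mult_diff:
  assumes "j \<le> n"
  shows "signed_choose (Suc n) j * (int (Suc n) - int j) = int (Suc n) * signed_choose n j"
proof -
  have "int (Suc n - j) * int (Suc n choose j) = int (Suc n) * int (n choose j)"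
    using binomial_absorb_comp[of "Suc n" j] by (metis of_nat_mult diff_Suc_1)
  moreover have "int (Suc n - j) = int (Suc n) - int j" using assms by simp
  ultimately show ?thesis by (simp add: signed_choose_def algebra_simps)
qed

lemma signed_choose_Suc_mult:
  "signed_choose n (Suc i) * (- int (Suc i)) = int n * signed_choose (n - 1) i"
proof -
  have "int (Suc i) * int (n choose Suc i) = int n * int ((n - 1) choose i)"
    using binomial_absorption[of i n] by (metis of_nat_mult)
  then have "(-1) ^ i * (int (Suc i) * int (n choose Suc i)) = (-1) ^ i * (int n * int ((n - 1) choose i))"
    by simp
  then show ?thesis by (simp add: signed_choose_def algebra_simps)
qed

lemma power_diff_mult_power_diff:
  "((Z::'r::comm_ring_1) - W) ^ m * (X - W) ^ n =
     (\<Sum>i\<le>m. of_nat (m choose i) * (Z - X) ^ i * (X - W) ^ (m + n - i))"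
proof -
  have "(Z - W) ^ m = (\<Sum>i\<le>m. of_nat (m choose i) * (Z - X) ^ i * (X - W) ^ (m - i))"
    using binomial_ring[of "Z - X" "X - W" m] by simp
  moreover have "(X - W) ^ (m - i) * (X - W) ^ n = (X - W) ^ (m + n - i)" if "i \<le> m" for i
    using that by (simp flip: power_add)
  ultimately show ?thesis
    by (simp add: sum_distrib_right mult.assoc)
qed

abbreviation zw_monomial :: "int \<Rightarrow> int \<Rightarrow> (int \<times> int) \<Rightarrow>\<^sub>0 complex" where
  "zw_monomial u v \<equiv> Poly_Mapping.single (u, v) 1"

abbreviation z_var :: "(int \<times> int) \<Rightarrow>\<^sub>0 complex" where "z_var \<equiv> zw_monomial 1 0"
abbreviation w_var :: "(int \<times> int) \<Rightarrow>\<^sub>0 complex" where "w_var \<equiv> zw_monomial 0 1"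

abbreviation xyz_monomial :: "int \<Rightarrow> int \<Rightarrow> int \<Rightarrow> (int \<times> int \<times> int) \<Rightarrow>\<^sub>0 complex" where
  "xyz_monomial u v t \<equiv> Poly_Mapping.single (u, v, t) 1"

lemma single_pair_power:
  "Poly_Mapping.single (u::int, v::int) (1::complex) ^ n = Poly_Mapping.single (int n * u, int n * v) 1"
  by (induction n) (auto simp: mult_single algebra_simps zero_prod_def[symmetric])

lemma single_triple_power:
  "Poly_Mapping.single (u::int, v::int, t::int) (1::complex) ^ n =
     Poly_Mapping.single (int n * u, int n * v, int n * t) 1"
  by (induction n) (auto simp: mult_single algebra_simps zero_prod_def[symmetric])

lemma poly_mapping_sum_singles:
  "Q = (\<Sum>\<kappa>\<in>Poly_Mapping.keys Q. Poly_Mapping.single \<kappa> (Poly_Mapping.lookup Q \<kappa>))"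
  by (rule poly_mapping_eqI)
     (simp add: lookup_sum lookup_single when_def not_in_keys_iff_lookup_eq_zero)

lemma single_zero_neg_one_power:
  "Poly_Mapping.single 0 ((-1) ^ n) = ((-1) ^ n :: 'k::comm_monoid_add \<Rightarrow>\<^sub>0 'r::comm_ring_1)"
  by (induction n) (simp_all add: single_uminus mult_single[of 0 _ 0, simplified, symmetric])

lemma z_minus_w_power_mult_monomial:
  "(z_var - w_var) ^ N * zw_monomial m n =
     (\<Sum>k\<le>N. of_int (signed_choose N k) * zw_monomial (m + int N - int k) (n + int k))"
  by (simp add: power_diff_expand sum_distrib_right single_pair_power mult_single mult.assoc
      add_ac add_diff_eq)

lemma w_minus_z_power_mult_monomial:
  "(w_var - z_var) ^ N * zw_monomial m n =
     (\<Sum>k\<le>N. of_int (signed_choose N k) * zw_monomial (m + int k) (n + int N - int k))"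
  by (simp add: power_diff_expand sum_distrib_right single_pair_power mult_single mult.assoc
      add_ac add_diff_eq)

lemma xyz_hom_jacobi_left_expand:
  "(xyz_monomial 1 0 0 - xyz_monomial 0 0 1) ^ m * (xyz_monomial 0 1 0 - xyz_monomial 0 0 1) ^ n
     * xyz_monomial 0 0 k =
   (\<Sum>p\<le>m. \<Sum>q\<le>n. Poly_Mapping.single (int m - int p, int n - int q, k + int p + int q)
                      (of_int (signed_choose m p * signed_choose n q)))"
  (is "_ = ?rhs")
proof -
  have "(xyz_monomial 1 0 0 - xyz_monomial 0 0 1) ^ m * (xyz_monomial 0 1 0 - xyz_monomial 0 0 1) ^ n
     * xyz_monomial 0 0 k =
    (\<Sum>p\<le>m. \<Sum>q\<le>n. of_int (signed_choose m p) * (xyz_monomial 1 0 0 ^ (m - p) * xyz_monomial 0 0 1 ^ p)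
       * (of_int (signed_choose n q) * (xyz_monomial 0 1 0 ^ (n - q) * xyz_monomial 0 0 1 ^ q))
       * xyz_monomial 0 0 k)"
    unfolding power_diff_expand sum_product by (simp only: sum_distrib_right)
  also have "\<dots> = ?rhs"
    by (intro sum.cong refl)
       (simp add: single_triple_power mult_single algebra_simps flip: single_of_int)
  finally show ?thesis .
qed

lemma xyz_hom_jacobi_right_expand:
  "(\<Sum>i\<le>m. of_nat (m choose i) * (xyz_monomial 1 0 0 - xyz_monomial 0 1 0) ^ i
            * (xyz_monomial 0 1 0 - xyz_monomial 0 0 1) ^ (m + n - i)) * xyz_monomial 0 0 k =
   (\<Sum>i\<le>m. \<Sum>j\<le>i. \<Sum>r\<le>m + n - i.
      Poly_Mapping.single (int i - int j, int j + int (m + n - i) - int r, k + int r)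
        (of_int (int (m choose i) * signed_choose i j * signed_choose (m + n - i) r)))"
  (is "_ = ?rhs")
proof -
  have "(\<Sum>i\<le>m. of_nat (m choose i) * (xyz_monomial 1 0 0 - xyz_monomial 0 1 0) ^ i
            * (xyz_monomial 0 1 0 - xyz_monomial 0 0 1) ^ (m + n - i)) * xyz_monomial 0 0 k =
    (\<Sum>i\<le>m. \<Sum>j\<le>i. \<Sum>r\<le>m + n - i. of_nat (m choose i)
       * (of_int (signed_choose i j) * (xyz_monomial 1 0 0 ^ (i - j) * xyz_monomial 0 1 0 ^ j))
       * (of_int (signed_choose (m + n - i) r)
          * (xyz_monomial 0 1 0 ^ (m + n - i - r) * xyz_monomial 0 0 1 ^ r)) * xyz_monomial 0 0 k)"
    unfolding power_diff_expand sum_distrib_right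
    by (intro sum.cong refl)
       (simp only: sum_distrib_left sum_product sum_distrib_right, rule sum.swap)
  also have "\<dots> = ?rhs"
    by (intro sum.cong refl)
       (simp add: single_triple_power mult_single algebra_simps
        flip: single_of_int single_of_nat)
  finally show ?thesis .
qed

subsection \<open>Taylor expansion of \<open>w\<^sup>p\<close> around \<open>z\<close>\<close>

definition taylor_poly :: "nat \<Rightarrow> int \<Rightarrow> (int \<times> int) \<Rightarrow>\<^sub>0 complex" where
  "taylor_poly M p = (\<Sum>i<M. Poly_Mapping.single 0 (of_int p gchoose i)
                               * (w_var - z_var) ^ i * zw_monomial (p - int i) 0)"

lemma taylor_poly_Suc:
  "taylor_poly (Suc M) p = taylor_poly M p
     + Poly_Mapping.single 0 (of_int p gchoose M) * (w_var - z_var) ^ M * zw_monomial (p - int M) 0"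
  by (simp add: taylor_poly_def)

lemma gchoose_pred_pascal:
  "(if M = 0 then 0 else (of_int (p - 1) gchoose (M - 1) :: complex)) + (of_int (p - 1) gchoose M)
     = of_int p gchoose M"
  using gbinomial_Suc_Suc[of "of_int (p - 1) :: complex" "M - 1"] by (cases M) simp_all

text \<open>Multiplying by \<open>w = z + (w - z)\<close> shifts \<open>p\<close> by one; Pascal's rule absorbs the shift
  up to an error divisible by \<open>(w - z)\<^sup>M\<close>.\<close>

lemma w_mult_taylor_poly:
  "w_var * taylor_poly M (p - 1) = taylor_poly M p + (w_var - z_var) ^ M
     * Poly_Mapping.single 0 (if M = 0 then 0 else of_int (p - 1) gchoose (M - 1) :: complex)
     * zw_monomial (p - int M) 0"
  (is "_ = _ + ?err M")
proof (induction M)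
  case 0
  then show ?case by (simp add: taylor_poly_def)
next
  case (Suc M)
  define D where "D = w_var - z_var"
  define c where "c q = Poly_Mapping.single (0::int \<times> int) (of_int q gchoose M :: complex)" for q
  have w_eq: "w_var * zw_monomial (p - 1 - int M) 0 = zw_monomial (p - int M) 0 + D * zw_monomial (p - 1 - int M) 0"
    by (simp add: D_def algebra_simps mult_single)
  have coeff: "?err M + D ^ M * c (p - 1) * zw_monomial (p - int M) 0 = D ^ M * c p * zw_monomial (p - int M) 0"
    unfolding c_def D_def gchoose_pred_pascal[where M = M and p = p, symmetric] single_add by (simp add: algebra_simps)
  have "w_var * taylor_poly (Suc M) (p - 1)
      = w_var * taylor_poly M (p - 1) + D ^ M * c (p - 1) * (w_var * zw_monomial (p - 1 - int M) 0)"
    by (simp add: taylor_poly_Suc c_def D_def algebra_simps)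
  also have "\<dots> = taylor_poly M p + (?err M + D ^ M * c (p - 1) * zw_monomial (p - int M) 0)
                   + D ^ Suc M * c (p - 1) * zw_monomial (p - int (Suc M)) 0"
    unfolding Suc.IH w_eq by (simp add: D_def algebra_simps)
  also have "\<dots> = taylor_poly (Suc M) p + ?err (Suc M)"
    unfolding coeff by (simp add: taylor_poly_Suc c_def D_def)
  finally show ?case .
qed

lemma taylor_poly_remainder_dvd: "(w_var - z_var) ^ M dvd zw_monomial 0 p - taylor_poly M p"
proof (induction p rule: int_induct[where k = 0])
  case base
  have "taylor_poly M 0 = (if M = 0 then 0 else 1)"
    by (cases M) (simp_all add: taylor_poly_def lessThan_Suc_eq_insert_0 sum.reindex zero_prod_def[symmetric])
  then show ?case by (simp add: zero_prod_def[symmetric])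
next
  case (step1 p)
  have "zw_monomial 0 (p + 1) - taylor_poly M (p + 1)
      = w_var * (zw_monomial 0 p - taylor_poly M p) + (w_var - z_var) ^ M
          * Poly_Mapping.single 0 (if M = 0 then 0 else of_int p gchoose (M - 1)) * zw_monomial (p + 1 - int M) 0"
    using w_mult_taylor_poly[of M "p + 1"] by (simp add: mult_single algebra_simps)
  then show ?case
    using step1.IH by (simp add: mult.assoc)
next
  case (step2 p)
  let ?r = "zw_monomial 0 (p - 1) - taylor_poly M (p - 1)"
  have "w_var * ?r = (zw_monomial 0 p - taylor_poly M p) - (w_var - z_var) ^ M
          * Poly_Mapping.single 0 (if M = 0 then 0 else of_int (p - 1) gchoose (M - 1)) * zw_monomial (p - int M) 0"
    using w_mult_taylor_poly[of M p] by (simp add: mult_single algebra_simps)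
  then have "(w_var - z_var) ^ M dvd zw_monomial 0 (-1) * (w_var * ?r)"
    using step2.IH by (simp add: mult.assoc)
  moreover have "zw_monomial 0 (-1) * w_var = 1"
    by (simp add: mult_single zero_prod_def[symmetric])
  ultimately show ?case
    by (simp flip: mult.assoc)
qed

lemma z_minus_w_power_mult_taylor_poly:
  "(z_var - w_var) ^ n * taylor_poly N k =
     (\<Sum>i<N. Poly_Mapping.single 0 ((-1) ^ n * (of_int k gchoose i))
              * ((w_var - z_var) ^ (n + i) * zw_monomial (k - int i) 0))"
proof -
  have "(z_var - w_var) ^ n = Poly_Mapping.single 0 ((-1) ^ n) * (w_var - z_var) ^ n"
    by (simp add: single_zero_neg_one_power flip: power_mult_distrib)
  then show ?thesis
    unfolding taylor_poly_def sum_distrib_left mult_single[of 0 "(-1) ^ n" 0, simplified, symmetric]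
    by (simp only: power_add mult_ac)
qed

subsection \<open>Pairing Laurent polynomials with distributions\<close>

text \<open>The monomial with exponent \<open>\<kappa>\<close> pairs with \<open>F\<close> to \<open>F \<kappa>\<close>, the coefficient of
  \<open>z\<^sup>-\<^sup>u\<^sup>-\<^sup>1 w\<^sup>-\<^sup>v\<^sup>-\<^sup>1\<close> for \<open>\<kappa> = (u, v)\<close>: this is \<open>Res\<^sub>z Res\<^sub>w z\<^sup>u w\<^sup>v F(z,w)\<close>.\<close>

definition pairing ::
    "('f::zero \<Rightarrow> 'a::ab_group_add \<Rightarrow> 'a) \<Rightarrow> ('k \<Rightarrow>\<^sub>0 'f) \<Rightarrow> ('k \<Rightarrow> 'a) \<Rightarrow> 'a" where
  "pairing s P F = (\<Sum>\<kappa>\<in>Poly_Mapping.keys P. s (Poly_Mapping.lookup P \<kappa>) (F \<kappa>))"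

context vector_space
begin

lemma pairing_eq_sum_superset:
  "finite A \<Longrightarrow> Poly_Mapping.keys P \<subseteq> A \<Longrightarrow>
     pairing scale P F = (\<Sum>\<kappa>\<in>A. scale (Poly_Mapping.lookup P \<kappa>) (F \<kappa>))"
  unfolding pairing_def by (rule sum.mono_neutral_left) (auto simp: in_keys_iff)

lemma pairing_add: "pairing scale (P + Q) F = pairing scale P F + pairing scale Q F"
proof -
  let ?A = "Poly_Mapping.keys P \<union> Poly_Mapping.keys Q"
  have "pairing scale (P + Q) F = (\<Sum>\<kappa>\<in>?A. scale (Poly_Mapping.lookup (P + Q) \<kappa>) (F \<kappa>))"
    by (rule pairing_eq_sum_superset) (auto simp: keys_add)
  then show ?thesis
    by (simp add: pairing_eq_sum_superset[of ?A P] pairing_eq_sum_superset[of ?A Q] lookup_add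
        scale_left_distrib sum.distrib)
qed

lemma pairing_zero [simp]: "pairing scale 0 F = 0"
  by (simp add: pairing_def)

lemma pairing_sum: "pairing scale (sum f A) F = (\<Sum>i\<in>A. pairing scale (f i) F)"
  by (induction A rule: infinite_finite_induct) (auto simp: pairing_add)

lemma pairing_single [simp]: "pairing scale (Poly_Mapping.single \<kappa> c) F = scale c (F \<kappa>)"
  by (simp add: pairing_def)

lemma pairing_const_mult: "pairing scale (Poly_Mapping.single 0 c * P) F = scale c (pairing scale P F)"
proof -
  have "pairing scale (Poly_Mapping.single 0 c * P) F
      = (\<Sum>\<kappa>\<in>Poly_Mapping.keys P. scale (c * Poly_Mapping.lookup P \<kappa>) (F \<kappa>))"
    unfolding mult_map_scale_conv_mult[symmetric]
    by (subst pairing_eq_sum_superset[of "Poly_Mapping.keys P"]) (auto simp: map.rep_eq in_keys_iff when_def)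
  then show ?thesis
    by (simp add: pairing_def scale_sum_right)
qed

lemma pairing_of_int: "pairing scale (of_int c * P) F = scale (of_int c) (pairing scale P F)"
  by (metis pairing_const_mult single_of_int)

lemma pairing_uminus: "pairing scale (- P) F = - pairing scale P F"
  using pairing_add[of "- P" P F] by (simp add: eq_neg_iff_add_eq_0)

lemma pairing_diff: "pairing scale (P - Q) F = pairing scale P F - pairing scale Q F"
  using pairing_add[of P "- Q" F] by (simp add: pairing_uminus)

lemma pairing_eq_0_if_dvd:
  assumes "\<And>\<kappa>. pairing scale (D * Poly_Mapping.single \<kappa> 1) F = 0" and "D dvd P"
  shows "pairing scale P F = 0"
proof -
  from \<open>D dvd P\<close> obtain Q where "P = D * Q" by blast
  also have "D * Q = (\<Sum>\<kappa>\<in>Poly_Mapping.keys Q. Poly_Mapping.single 0 (Poly_Mapping.lookup Q \<kappa>)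
                                            * (D * Poly_Mapping.single \<kappa> 1))"
    by (subst poly_mapping_sum_singles) (simp add: sum_distrib_left mult_single mult.left_commute)
  finally show ?thesis
    by (simp add: pairing_sum pairing_const_mult assms(1))
qed

end

locale complex_vector_space = vector_space s for s :: "complex \<Rightarrow> 'a::ab_group_add \<Rightarrow> 'a"
begin

lemma zw_mult_eq_pairing:
  "zw_mult s N F m n = pairing s ((z_var - w_var) ^ N * zw_monomial m n) (case_prod F)"
  unfolding z_minus_w_power_mult_monomial pairing_sum pairing_of_int
  by (simp add: zw_mult_def signed_choose_def)

lemma jprod_eq_pairing:
  "jprod s br n a b k = pairing s ((z_var - w_var) ^ n * zw_monomial 0 k) (case_prod (bracket2 br a b))"
  unfolding jprod_def zw_mult_eq_pairing ..

lemma pairing_eq_0_if_zw_mult_eq_0: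
  assumes "zw_mult s N F = (\<lambda>m n. 0)" and "N \<le> J" and "(w_var - z_var) ^ J dvd P"
  shows "pairing s P (case_prod F) = 0"
proof (rule pairing_eq_0_if_dvd)
  show "pairing s ((z_var - w_var) ^ N * Poly_Mapping.single \<kappa> 1) (case_prod F) = 0" for \<kappa>
    using assms(1) zw_mult_eq_pairing[of N F "fst \<kappa>" "snd \<kappa>"] by (simp add: fun_eq_iff)
  have "z_var - w_var dvd w_var - z_var"
    using dvd_minus_iff[of "z_var - w_var" "z_var - w_var"] by simp
  then have "(z_var - w_var) ^ N dvd (w_var - z_var) ^ J"
    using \<open>N \<le> J\<close> by (rule dvd_power_le)
  from this \<open>(w_var - z_var) ^ J dvd P\<close> show "(z_var - w_var) ^ N dvd P"
    by (rule dvd_trans)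
qed

lemma dderiv_power:
  "(dderiv s ^^ i) g k = s ((-1) ^ i * fact i * (of_int k gchoose i)) (g (k - int i))"
proof (induction i arbitrary: k)
  case 0
  then show ?case by simp
next
  case (Suc i)
  have "(-1) ^ Suc i * fact (Suc i) * (of_int k gchoose Suc i :: complex)
      = - ((-1) ^ i * fact i * (of_nat (Suc i) * (of_int k gchoose Suc i)))"
    by (simp only: fact_Suc power_Suc of_nat_mult) (simp add: algebra_simps)
  also have "\<dots> = of_int (- k) * ((-1) ^ i * fact i * (of_int (k - 1) gchoose i))"
    unfolding gbinomial_absorption by simp
  finally have coeff: "of_int (- k) * ((-1) ^ i * fact i * (of_int (k - 1) gchoose i))
      = (-1) ^ Suc i * fact (Suc i) * (of_int k gchoose Suc i :: complex)" ..
  have "(dderiv s ^^ Suc i) g k = s (of_int (- k)) ((dderiv s ^^ i) g (k - 1))"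
    by (simp add: dderiv_def)
  also have "\<dots> = s (of_int (- k) * ((-1) ^ i * fact i * (of_int (k - 1) gchoose i))) (g (k - int (Suc i)))"
    unfolding Suc.IH by (simp add: algebra_simps)
  finally show ?case
    unfolding coeff .
qed

end

subsection \<open>\<open>j\<close>-products in a Hom-Lie algebra\<close>

lemma jprod_expand:
  "jprod s br n a b k = (\<Sum>j\<le>n. s (of_int (signed_choose n j)) (br (a (int n - int j)) (b (k + int j))))"
  by (simp add: jprod_def zw_mult_def bracket2_def signed_choose_def)

locale hom_lie_algebra =
  fixes s :: "complex \<Rightarrow> 'a::ab_group_add \<Rightarrow> 'a" and br :: "'a \<Rightarrow> 'a \<Rightarrow> 'a" and al :: "'a \<Rightarrow> 'a"
  assumes hom_lie: "hom_lie s br al"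
begin

sublocale complex_vector_space s
  using hom_lie unfolding hom_lie_def complex_vector_space_def by blast

sublocale vector_space_pair s s ..

lemma linear_bracket_left: "Vector_Spaces.linear s s (\<lambda>x. br x y)"
  using hom_lie unfolding hom_lie_def by blast

lemma linear_bracket_right: "Vector_Spaces.linear s s (br x)"
  using hom_lie unfolding hom_lie_def by blast

lemma bracket_skew: "br x y = - br y x"
  using hom_lie unfolding hom_lie_def by blast

lemma hom_jacobi: "br (br x y) (al z) + br (br y z) (al x) + br (br z x) (al y) = 0"
  using hom_lie unfolding hom_lie_def by blast

lemmas bracket_add_right = linear_add[OF linear_bracket_right]
lemmas bracket_scale_left = linear_scale[OF linear_bracket_left]
lemmas bracket_scale_right = linear_scale[OF linear_bracket_right]
lemmas bracket_sum_left = linear_sum[OF linear_bracket_left]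
lemmas bracket_sum_right = linear_sum[OF linear_bracket_right]
lemmas bracket_zero_left = linear_0[OF linear_bracket_left]
lemmas bracket_minus_right = linear_neg[OF linear_bracket_right]

lemma hom_jacobi_leibniz: "br (al x) (br y z) = br (br x y) (al z) + br (al y) (br x z)"
proof -
  have "br (br z x) (al y) = - br (al y) (br z x)"
    by (rule bracket_skew)
  also have "\<dots> = br (al y) (br x z)"
    by (simp only: bracket_skew[of z x] bracket_minus_right minus_minus)
  finally have "br (br x y) (al z) + - br (al x) (br y z) + br (al y) (br x z) = 0"
    using hom_jacobi[of x y z] bracket_skew[of "br y z" "al x"] by (simp only:)
  then show ?thesis
    by (simp add: algebra_simps)
qed

lemma jprod_dderiv_left: "jprod s br n (dderiv s a) b k = - s (of_nat n) (jprod s br (n - 1) a b k)"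
proof (cases n)
  case 0
  then show ?thesis by (simp add: jprod_expand dderiv_def bracket_zero_left)
next
  case (Suc n')
  have coeff: "of_int (signed_choose n j) * of_int (- (int n - int j))
      = - (of_nat n * of_int (signed_choose n' j) :: complex)"
    if "j \<le> n'" for j
  proof -
    have "of_int (signed_choose n j) * (of_nat n - of_nat j) = (of_nat n * of_int (signed_choose n' j) :: complex)"
      using arg_cong[OF signed_choose_mult_diff[OF that], of "of_int :: int \<Rightarrow> complex"] Suc by simp
    then show ?thesis
      by (metis minus_diff_eq mult_minus_right of_int_diff of_int_of_nat_eq)
  qed
  have "jprod s br n (dderiv s a) b k
      = (\<Sum>j\<le>n'. s (of_int (signed_choose n j) * of_int (- (int n - int j)))
                      (br (a (int n' - int j)) (b (k + int j))))"
    unfolding jprod_expand dderiv_def Suc sum.atMost_Suc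
    by (simp add: bracket_scale_left bracket_zero_left)
  also have "\<dots> = (\<Sum>j\<le>n'. - s (of_nat n)
                       (s (of_int (signed_choose n' j)) (br (a (int n' - int j)) (b (k + int j)))))"
    by (intro sum.cong refl) (simp only: atMost_iff coeff scale_minus_left scale_scale)
  also have "\<dots> = - s (of_nat n) (jprod s br (n - 1) a b k)"
    by (simp add: jprod_expand Suc scale_sum_right sum_negf)
  finally show ?thesis .
qed

lemma jprod_dderiv_right:
  "jprod s br n a (dderiv s b) k = dderiv s (jprod s br n a b) k + s (of_nat n) (jprod s br (n - 1) a b k)"
proof -
  define G where "G j = br (a (int n - int j)) (b (k + int j - 1))" for j
  have "jprod s br n a (dderiv s b) k
      = (\<Sum>j\<le>n. s (of_int (signed_choose n j) * of_int (- k)) (G j)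
                + s (of_int (signed_choose n j) * of_int (- int j)) (G j))"
    unfolding jprod_expand dderiv_def G_def
    by (intro sum.cong refl)
       (simp only: bracket_scale_right scale_scale minus_add_distrib of_int_add distrib_left
         scale_left_distrib add_diff_eq bracket_add_right scale_right_distrib)
  also have "\<dots> = dderiv s (jprod s br n a b) k
                   + (\<Sum>j\<le>n. s (of_int (signed_choose n j) * of_int (- int j)) (G j))"
    unfolding sum.distrib by (simp add: dderiv_def jprod_expand G_def scale_sum_right algebra_simps)
  also have "(\<Sum>j\<le>n. s (of_int (signed_choose n j) * of_int (- int j)) (G j))
      = s (of_nat n) (jprod s br (n - 1) a b k)"
  proof (cases n)
    case 0
    then show ?thesis by simp
  next
    case (Suc n')
    have "(\<Sum>j\<le>n. s (of_int (signed_choose n j) * of_int (- int j)) (G j))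
        = (\<Sum>i\<le>n'. s (of_int (signed_choose n (Suc i) * (- int (Suc i)))) (G (Suc i)))"
      unfolding Suc sum.atMost_Suc_shift by simp
    also have "\<dots> = (\<Sum>i\<le>n'. s (of_nat n)
                         (s (of_int (signed_choose n' i)) (br (a (int n' - int i)) (b (k + int i)))))"
      by (intro sum.cong refl) (simp only: signed_choose_Suc_mult scale_scale G_def, simp add: Suc)
    also have "\<dots> = s (of_nat n) (jprod s br (n - 1) a b k)"
      by (simp add: jprod_expand Suc scale_sum_right)
    finally show ?thesis .
  qed
  finally show ?thesis .
qed

lemma jprod_jprod_right_expand:
  "jprod s br m a (jprod s br n b c) k =
     (\<Sum>p\<le>m. \<Sum>q\<le>n. s (of_int (signed_choose m p * signed_choose n q))
        (br (a (int m - int p)) (br (b (int n - int q)) (c (k + int p + int q)))))"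
  by (simp add: jprod_expand bracket_sum_right bracket_scale_right scale_sum_right add.assoc)

lemma jprod_jprod_left_expand:
  "jprod s br N (jprod s br i a b) c k =
     (\<Sum>j\<le>i. \<Sum>r\<le>N. s (of_int (signed_choose i j * signed_choose N r))
        (br (br (a (int i - int j)) (b (int j + int N - int r))) (c (k + int r))))"
  by (subst sum.swap) (simp add: jprod_expand bracket_sum_left bracket_scale_left scale_sum_right algebra_simps)

lemma jprod_hom_jacobi:
  "jprod s br m (amap al a) (jprod s br n b c) k =
     jprod s br n (amap al b) (jprod s br m a c) k
     + (\<Sum>i\<le>m. s (of_nat (m choose i)) (jprod s br (m + n - i) (jprod s br i a b) (amap al c) k))"
proof -
  define H where "H = (\<lambda>(u, v, t). br (br (a u) (b v)) (al (c t)))"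
  have swapped: "jprod s br n (amap al b) (jprod s br m a c) k =
     (\<Sum>p\<le>m. \<Sum>q\<le>n. s (of_int (signed_choose m p * signed_choose n q))
        (br (al (b (int n - int q))) (br (a (int m - int p)) (c (k + int p + int q)))))"
    unfolding jprod_jprod_right_expand amap_def by (subst sum.swap) (simp add: algebra_simps)
  have bracket_bracket_term: "(\<Sum>p\<le>m. \<Sum>q\<le>n. s (of_int (signed_choose m p * signed_choose n q))
        (br (br (a (int m - int p)) (b (int n - int q))) (al (c (k + int p + int q)))))
     = pairing s ((xyz_monomial 1 0 0 - xyz_monomial 0 0 1) ^ m
                  * (xyz_monomial 0 1 0 - xyz_monomial 0 0 1) ^ n * xyz_monomial 0 0 k) H"
    unfolding xyz_hom_jacobi_left_expand pairing_sum pairing_single H_def by simp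
  have jprod_jprod_term: "(\<Sum>i\<le>m. s (of_nat (m choose i)) (jprod s br (m + n - i) (jprod s br i a b) (amap al c) k))
     = pairing s ((\<Sum>i\<le>m. of_nat (m choose i) * (xyz_monomial 1 0 0 - xyz_monomial 0 1 0) ^ i
                    * (xyz_monomial 0 1 0 - xyz_monomial 0 0 1) ^ (m + n - i)) * xyz_monomial 0 0 k) H"
    unfolding xyz_hom_jacobi_right_expand pairing_sum pairing_single H_def jprod_jprod_left_expand amap_def
    by (simp only: scale_sum_right scale_scale of_int_mult of_int_of_nat_eq prod.case mult.assoc)
  have jacobi: "br (al (a u)) (br (b v) (c t)) = br (br (a u) (b v)) (al (c t)) + br (al (b v)) (br (a u) (c t))"
    for u v t
    by (rule hom_jacobi_leibniz)
  have "jprod s br m (amap al a) (jprod s br n b c) k =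
     (\<Sum>p\<le>m. \<Sum>q\<le>n. s (of_int (signed_choose m p * signed_choose n q))
        (br (al (a (int m - int p))) (br (b (int n - int q)) (c (k + int p + int q)))))"
    by (simp add: jprod_jprod_right_expand amap_def)
  then show ?thesis
    unfolding jacobi scale_right_distrib sum.distrib swapped bracket_bracket_term jprod_jprod_term
      power_diff_mult_power_diff
    by (simp only: add.commute)
qed

lemma jprod_swap_eq_pairing:
  "jprod s br J b a q = - pairing s ((w_var - z_var) ^ J * zw_monomial q 0) (case_prod (bracket2 br a b))"
  unfolding jprod_expand w_minus_z_power_mult_monomial pairing_sum pairing_of_int
  by (simp add: bracket2_def sum_negf bracket_skew[of "b _"])

lemma jprod_skew_symmetry:
  assumes "local_pair s br a b"
  shows "jprod s br n a b k =
    - Sum_any (\<lambda>i::nat. s ((-1) ^ (n + i) / fact i) ((dderiv s ^^ i) (jprod s br (n + i) b a) k))"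
proof -
  define F where "F = case_prod (bracket2 br a b)"
  from assms obtain N where locality: "zw_mult s N (bracket2 br a b) = (\<lambda>m n. 0)"
    unfolding local_pair_def by blast
  define T where "T i = Poly_Mapping.single 0 ((-1) ^ n * (of_int k gchoose i))
                          * ((w_var - z_var) ^ (n + i) * zw_monomial (k - int i) 0)" for i
  have summand: "s ((-1) ^ (n + i) / fact i) ((dderiv s ^^ i) (jprod s br (n + i) b a) k)
      = - pairing s (T i) F" for i
  proof -
    have "((-1) ^ (n + i) / fact i) * ((-1) ^ i * fact i * (of_int k gchoose i))
        = (-1) ^ n * (of_int k gchoose i :: complex)"
      by (simp add: power_add field_simps flip: power_mult_distrib)
    then have "s ((-1) ^ (n + i) / fact i) ((dderiv s ^^ i) (jprod s br (n + i) b a) k)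
        = s ((-1) ^ n * (of_int k gchoose i)) (jprod s br (n + i) b a (k - int i))"
      by (simp only: dderiv_power scale_scale)
    then show ?thesis
      by (simp add: jprod_swap_eq_pairing F_def T_def pairing_const_mult)
  qed
  have taylor_approx: "pairing s ((z_var - w_var) ^ n * taylor_poly N k) F = jprod s br n a b k"
  proof -
    have "(w_var - z_var) ^ N
        dvd (z_var - w_var) ^ n * zw_monomial 0 k - (z_var - w_var) ^ n * taylor_poly N k"
      unfolding right_diff_distrib[symmetric] using taylor_poly_remainder_dvd by (rule dvd_mult)
    with locality
    have "pairing s ((z_var - w_var) ^ n * zw_monomial 0 k - (z_var - w_var) ^ n * taylor_poly N k) F = 0"
      unfolding F_def by (rule pairing_eq_0_if_zw_mult_eq_0[OF _ order.refl])
    then show ?thesis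
      by (simp add: pairing_diff jprod_eq_pairing F_def)
  qed
  have "pairing s (T i) F = 0" if "N \<le> i" for i
    using locality unfolding F_def
    by (rule pairing_eq_0_if_zw_mult_eq_0[of _ _ "n + i"])
       (use that in \<open>simp_all add: T_def mult.left_commute\<close>)
  then have "Sum_any (\<lambda>i. s ((-1) ^ (n + i) / fact i) ((dderiv s ^^ i) (jprod s br (n + i) b a) k))
      = (\<Sum>i<N. - pairing s (T i) F)"
    unfolding summand by (intro Sum_any.expand_superset) (auto simp: not_less[symmetric])
  also have "\<dots> = - pairing s ((z_var - w_var) ^ n * taylor_poly N k) F"
    by (simp add: z_minus_w_power_mult_taylor_poly T_def pairing_sum sum_negf)
  also have "\<dots> = - jprod s br n a b k"
    by (simp add: taylor_approx)
  finally show ?thesis by simp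
qed

end

theorem proposition4p7:
  fixes s :: "complex \<Rightarrow> 'a::ab_group_add \<Rightarrow> 'a"
    and br :: "'a \<Rightarrow> 'a \<Rightarrow> 'a" and al :: "'a \<Rightarrow> 'a"
    and a b c :: "int \<Rightarrow> 'a" and m n :: nat
  assumes "hom_lie s br al"
  shows "jprod s br n (dderiv s a) b = (\<lambda>k. - s (of_nat n) (jprod s br (n - 1) a b k)) \<and>
         jprod s br n a (dderiv s b) =
           (\<lambda>k. dderiv s (jprod s br n a b) k + s (of_nat n) (jprod s br (n - 1) a b k)) \<and>
         (local_pair s br a b \<longrightarrow>
           jprod s br n a b =
           (\<lambda>k. - Sum_any (\<lambda>i::nat. s ((-1) ^ (n + i) / fact i)
                                     ((dderiv s ^^ i) (jprod s br (n + i) b a) k)))) \<and>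
         jprod s br m (amap al a) (jprod s br n b c) =
           (\<lambda>k. jprod s br n (amap al b) (jprod s br m a c) k +
                (\<Sum>i\<le>m. s (of_nat (m choose i)) (jprod s br (m + n - i) (jprod s br i a b) (amap al c) k)))"
proof -
  interpret hom_lie_algebra s br al
    by (rule hom_lie_algebra.intro) (fact assms)
  show ?thesis
    by (intro conjI impI ext jprod_dderiv_left jprod_dderiv_right jprod_skew_symmetry jprod_hom_jacobi)
qed

end
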